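(* With $p=(z-w)^2$ and notation as in the context, for integers $k\ge 2$ and $n\ge 0$: \[ \langle w^k\phi_n,z^k\psi_n\rangle=\begin{cases}0, & n\le k-3,\\[2pt] \dfrac{A^n_{0,n}A^n_{n,0}}{D_nD_{n+1}}, & n=k-2,\\[6pt] \dfrac{-A^{n+1}_{0,n+1}A^n_{n,n+1-k}+A^n_{0,n}A^n_{n,n+2-k}}{D_nD_{n+1}}, & n\ge k-1.\end{cases} \] Consequently, for every $k\ge3$, \[ \Sigma_k=\sum_{n=k-2}^\infty\left(\frac{2(n+3-k)(n^2+5n+4+3k-3k^2)}{(n+1)(n+2)(n+3)(n+4)}\right)^2 . \]
   Context: $H^2(\mathbb D^2)$ is the Hardy space on the bidisk (monomials $z^aw^b$ orthonormal). Let $p=(z-w)^2$ and $M=[p]$ the smallest closed subspace containing $p$ invariant under multiplication by $z$ and $w$. For $n\ge0$ let $A^n=(a_{i,j})_{i,j=0}^n$ with $a_{i,j}=\langle pw^{|i-j|},pz^{|i-j|}\rangle$ (the symmetric pentadiagonal Toeplitz matrix with diagonal $6$, first off-diagonals $-4$, second off-diagonals $1$); $D_0=1$, $D_n=\det A^{n-1}$ ($n\ge1$); $A^n_{i,j}$ is the $(i,j)$ cofactor of $A^n$ ($(-1)^{i+j}$ times the minor deleting row $i$ and column $j$; $A^0_{0,0}=1$). Define $\phi_0=\psi_0=p/\|p\|$ and for $n\ge1$ $\phi_n=\frac{\sum_{j=0}^n pA^n_{0,j}z^jw^{n-j}}{\sqrt{D_{n+1}D_n}}$, $\psi_n=\frac{\sum_{j=0}^n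 pA^n_{n,j}z^jw^{n-j}}{\sqrt{D_{n+1}D_n}}$ (orthonormal bases of $M\ominus zM$ and $M\ominus wM$). For $k\ge0$, $\Sigma_k:=\sum_{n\ge0}|\langle w^k\phi_n,z^k\psi_n\rangle|^2$. *)

theory Defs
  imports Complex_Main "HOL-Computational_Algebra.Polynomial" "Jordan_Normal_Form.Determinant"
begin

text \<open>Polynomials in two variables z, w with real coefficients are modelled as
  real poly poly: the outer variable is z, the inner one is w, so the coefficient
  of z^a w^b in P is coeff (coeff P a) b.\<close>

type_synonym bipoly = "real poly poly"

definition zz :: bipoly where "zz = monom 1 1"
definition ww :: bipoly where "ww = [:monom 1 1:]"

text \<open>H^2(D^2) inner product restricted to polynomials: monomials z^a w^b orthonormal.\<close>
definition hip :: "bipoly \<Rightarrow> bipoly \<Rightarrow> real" where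
  "hip P Q = (\<Sum>a\<le>degree P. \<Sum>b\<le>degree (coeff P a). coeff (coeff P a) b * coeff (coeff Q a) b)"

definition hnorm :: "bipoly \<Rightarrow> real" where "hnorm P = sqrt (hip P P)"

definition pp :: bipoly where "pp = (zz - ww)^2"

definition Amat :: "nat \<Rightarrow> real mat" where
  "Amat n = mat (n+1) (n+1) (\<lambda>(i,j). let d = nat \<bar>int i - int j\<bar> in hip (pp * ww^d) (pp * zz^d))"

definition Dn :: "nat \<Rightarrow> real" where
  "Dn n = (if n = 0 then 1 else det (Amat (n - 1)))"

definition Acof :: "nat \<Rightarrow> nat \<Rightarrow> nat \<Rightarrow> real" where
  "Acof n i j = cofactor (Amat n) i j"

definition phi :: "nat \<Rightarrow> bipoly" where
  "phi n = (if n = 0 then smult [:1 / hnorm pp:] pp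
     else smult [:1 / sqrt (Dn (n+1) * Dn n):]
            (\<Sum>j\<le>n. smult [:Acof n 0 j:] (pp * zz^j * ww^(n-j))))"

definition psi :: "nat \<Rightarrow> bipoly" where
  "psi n = (if n = 0 then smult [:1 / hnorm pp:] pp
     else smult [:1 / sqrt (Dn (n+1) * Dn n):]
            (\<Sum>j\<le>n. smult [:Acof n n j:] (pp * zz^j * ww^(n-j))))"

definition Sigma_k :: "nat \<Rightarrow> real" where
  "Sigma_k k = (\<Sum>n. \<bar>hip (ww^k * phi n) (zz^k * psi n)\<bar>^2)"

end

theory Submission
  imports Defs
begin

(*
  For s + t = s' + t' the inner product of p z^s w^t and p z^s' w^t' only depends on s - s' and
  equals the entry of the pentadiagonal matrix with rows 1, -4, 6, -4, 1; in particular A^n is a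
  section of it. Expanding w^k phi_n and z^k psi_n in these products gives
    <w^k phi_n, z^k psi_n> = sum_j A^n_{n,j} sum_i A^n_{0,i} a_{i,j+k} / (D_n D_{n+1}),
  and the inner sum is a row of adj(A^n) times a column of the larger band matrix: it vanishes
  unless j + k is n + 1 or n + 2. Everything is explicit, because A^n x = e_0 is solved by the
  cubic x_i = (i+1)(n+1-i)(n+2-i) / ((n+3)(n+4)), the band rows being fourth differences. By
  Cramer's rule this gives every cofactor needed and, via A^n_{0,0} = D_n, the closed form
  D_n = (n+1)(n+2)^2(n+3)/12. The resulting coefficients are O(1/n), so their squares are summable.
*)

definition bcoeff :: "bipoly \<Rightarrow> nat \<Rightarrow> nat \<Rightarrow> real" where
  "bcoeff P a b = coeff (coeff P a) b"

definition bmonom :: "nat \<Rightarrow> nat \<Rightarrow> bipoly" where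
  "bmonom a b = monom (monom 1 b) a"

lemma zz_power_mult_ww_power: "zz^a * ww^b = bmonom a b"
proof -
  have "ww^b = [:monom 1 b:]"
    unfolding ww_def by (induction b) (auto simp: mult_monom)
  then show ?thesis
    unfolding zz_def bmonom_def by (simp add: monom_power smult_monom)
qed

lemma bcoeff_bmonom: "bcoeff (bmonom a b) a' b' = (if a = a' \<and> b = b' then 1 else 0)"
  unfolding bcoeff_def bmonom_def by auto

lemma bcoeff_add: "bcoeff (P + Q) a b = bcoeff P a b + bcoeff Q a b"
  by (simp add: bcoeff_def)

lemma bcoeff_diff: "bcoeff (P - Q) a b = bcoeff P a b - bcoeff Q a b"
  by (simp add: bcoeff_def)

definition inner_degree_sum :: "bipoly \<Rightarrow> nat" where
  "inner_degree_sum P = (\<Sum>a\<le>degree P. degree (coeff P a))"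

lemma degree_coeff_le_inner_degree_sum: "degree (coeff P a) \<le> inner_degree_sum P"
proof (cases "a \<le> degree P")
  case True
  then show ?thesis unfolding inner_degree_sum_def by (intro member_le_sum) auto
qed (simp add: coeff_eq_0)

lemma hip_eq_sum_box:
  assumes "degree P \<le> A" and "\<And>a. degree (coeff P a) \<le> B"
  shows "hip P Q = (\<Sum>a\<le>A. \<Sum>b\<le>B. bcoeff P a b * bcoeff Q a b)"
proof -
  have "hip P Q = (\<Sum>a\<le>degree P. \<Sum>b\<le>B. bcoeff P a b * bcoeff Q a b)"
    unfolding hip_def bcoeff_def
    by (intro sum.cong refl sum.mono_neutral_left) (use assms(2) in \<open>auto simp: coeff_eq_0\<close>)
  also have "\<dots> = (\<Sum>a\<le>A. \<Sum>b\<le>B. bcoeff P a b * bcoeff Q a b)"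
    by (rule sum.mono_neutral_left) (use assms(1) in \<open>auto simp: bcoeff_def coeff_eq_0\<close>)
  finally show ?thesis .
qed

lemma hip_commute: "hip P Q = hip Q P"
proof -
  let ?A = "degree P + degree Q" and ?B = "inner_degree_sum P + inner_degree_sum Q"
  have "degree (coeff P a) \<le> ?B" "degree (coeff Q a) \<le> ?B" for a
    using degree_coeff_le_inner_degree_sum[of P a] degree_coeff_le_inner_degree_sum[of Q a]
    by auto
  then show ?thesis
    by (simp add: hip_eq_sum_box[of P ?A ?B] hip_eq_sum_box[of Q ?A ?B] mult.commute)
qed

lemma hip_add_right: "hip P (Q + Q') = hip P Q + hip P Q'"
  by (simp add: hip_def algebra_simps sum.distrib)

lemma hip_diff_right: "hip P (Q - Q') = hip P Q - hip P Q'"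
  by (simp add: hip_def algebra_simps sum_subtractf)

lemma hip_smult_right: "hip P (smult [:c:] Q) = c * hip P Q"
  by (simp add: hip_def sum_distrib_left algebra_simps)

lemma hip_sum_right: "hip P (\<Sum>j\<in>S. f j) = (\<Sum>j\<in>S. hip P (f j))"
proof (induction S rule: infinite_finite_induct)
  case (insert x F)
  then show ?case by (simp add: hip_add_right)
qed (simp_all add: hip_def)

lemma hip_add_left: "hip (P + P') Q = hip P Q + hip P' Q"
  by (simp add: hip_commute[of _ Q] hip_add_right)

lemma hip_diff_left: "hip (P - P') Q = hip P Q - hip P' Q"
  by (simp add: hip_commute[of _ Q] hip_diff_right)

lemma hip_smult_left: "hip (smult [:c:] P) Q = c * hip P Q"
  by (simp add: hip_commute[of _ Q] hip_smult_right)

lemma hip_sum_left: "hip (\<Sum>j\<in>S. f j) Q = (\<Sum>j\<in>S. hip (f j) Q)"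
  by (simp add: hip_commute[of _ Q] hip_sum_right)

lemma hip_bmonom_left: "hip (bmonom a b) Q = bcoeff Q a b"
proof -
  have "degree (bmonom a b) \<le> a" "degree (coeff (bmonom a b) a') \<le> b" for a'
    unfolding bmonom_def by (simp_all add: degree_monom_le coeff_monom)
  then have "hip (bmonom a b) Q = (\<Sum>a'\<le>a. \<Sum>b'\<le>b. bcoeff (bmonom a b) a' b' * bcoeff Q a' b')"
    by (rule hip_eq_sum_box)
  also have "\<dots> = (\<Sum>a'\<le>a. if a' = a then bcoeff Q a b else 0)"
    by (intro sum.cong refl)
      (auto simp: bcoeff_bmonom if_distrib[of "\<lambda>x. x * y" for y] cong: if_cong)
  also have "\<dots> = bcoeff Q a b"
    by simp
  finally show ?thesis .
qed

definition pentadiag :: "nat \<Rightarrow> nat \<Rightarrow> real" where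
  "pentadiag i j = (if i = j then 6 else if i = j + 1 \<or> j = i + 1 then -4
     else if i = j + 2 \<or> j = i + 2 then 1 else 0)"

lemma hip_pp_shifts:
  assumes "s + t = s' + t'"
  shows "hip (pp * zz^s * ww^t) (pp * zz^s' * ww^t') = pentadiag s s'"
proof -
  have pp_shift: "pp * zz^s * ww^t =
      bmonom (s+2) t - (bmonom (s+1) (t+1) + bmonom (s+1) (t+1)) + bmonom s (t+2)" for s t
    unfolding pp_def zz_power_mult_ww_power[symmetric]
    by (simp add: power2_eq_square power_add algebra_simps)
  show ?thesis
    unfolding pp_shift hip_add_left hip_diff_left hip_bmonom_left bcoeff_add bcoeff_diff
      bcoeff_bmonom pentadiag_def
    using assms by auto
qed

lemma pentadiag_commute: "pentadiag i j = pentadiag j i"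
  unfolding pentadiag_def by auto

lemma pentadiag_Suc_Suc: "pentadiag (Suc i) (Suc j) = pentadiag i j"
  unfolding pentadiag_def by auto

lemma pentadiag_reflect:
  assumes "i \<le> n" "m \<le> n"
  shows "pentadiag (n - i) m = pentadiag i (n - m)"
  unfolding pentadiag_def using assms by (intro if_cong refl) arith+

lemma Amat_carrier: "Amat n \<in> carrier_mat (n+1) (n+1)"
  unfolding Amat_def by simp

lemma Amat_index:
  assumes "i \<le> n" "j \<le> n"
  shows "Amat n $$ (i,j) = pentadiag i j"
proof -
  define d where "d = nat \<bar>int i - int j\<bar>"
  have "hip (pp * ww^d) (pp * zz^d) = hip (pp * zz^0 * ww^d) (pp * zz^d * ww^0)"
    by simp
  also have "\<dots> = pentadiag 0 d"
    by (rule hip_pp_shifts) simp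
  also have "\<dots> = pentadiag i j"
    unfolding d_def pentadiag_def by auto
  finally show ?thesis
    using assms unfolding Amat_def by (simp add: d_def Let_def)
qed

lemma sum_mult_pentadiag:
  fixes f :: "nat \<Rightarrow> real" and N :: nat
  defines "g \<equiv> \<lambda>i. if i \<le> N then f i else 0"
  shows "(\<Sum>i\<le>N. f i * pentadiag i m) =
    (if 2 \<le> m then g (m-2) else 0) - (if 1 \<le> m then 4 * g (m-1) else 0)
      + 6 * g m - 4 * g (m+1) + g (m+2)"
proof -
  have "(\<Sum>i\<le>N. f i * pentadiag i m) = (\<Sum>i\<le>N+m+2. g i * pentadiag i m)"
    by (rule sum.mono_neutral_cong_left) (auto simp: g_def)
  also have "\<dots> = (\<Sum>i\<in>{m-2..m+2}. g i * pentadiag i m)"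
    by (rule sum.mono_neutral_right) (auto simp: pentadiag_def)
  also have "\<dots> = (if 2 \<le> m then g (m-2) else 0) - (if 1 \<le> m then 4 * g (m-1) else 0)
      + 6 * g m - 4 * g (m+1) + g (m+2)"
  proof -
    consider "m = 0" | "m = 1" | m' where "m = m' + 2"
      by (cases m; cases "m - 1") auto
    then show ?thesis
      by cases (simp_all add: numeral_eq_Suc sum.atLeast_Suc_atMost atMost_atLeast0[symmetric]
          pentadiag_def)
  qed
  finally show ?thesis .
qed

definition cubic :: "nat \<Rightarrow> nat \<Rightarrow> real" where
  "cubic n i = (real i + 1) * (real n + 1 - real i) * (real n + 2 - real i)"

(* The band rows are fourth differences, which annihilate cubics; cubic n vanishes at -1, n+1 and
   n+2, so the only boundary defect is the missing term cubic n (-2) = -(n+3)(n+4) at m = 0. *)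
lemma sum_cubic_mult_pentadiag:
  assumes "m \<le> n"
  shows "(\<Sum>i\<le>n. cubic n i * pentadiag i m) = (if m = 0 then (real n + 3) * (real n + 4) else 0)"
proof -
  have "(\<Sum>i\<le>n. cubic n i * pentadiag i m) =
      (if 2 \<le> m then cubic n (m-2) else 0) - (if 1 \<le> m then 4 * cubic n (m-1) else 0)
      + 6 * cubic n m - 4 * cubic n (m+1) + cubic n (m+2)"
    unfolding sum_mult_pentadiag using assms by (auto simp: cubic_def le_Suc_eq)
  also have "\<dots> = (if m = 0 then (real n + 3) * (real n + 4) else 0)"
  proof -
    consider "m = 0" | "m = 1" | m' where "m = m' + 2"
      by (cases m; cases "m - 1") auto
    then show ?thesis
      by cases (simp_all add: cubic_def algebra_simps)
  qed
  finally show ?thesis .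
qed

lemma cofactor_eq_det_mult_solution:
  fixes A :: "'a :: comm_ring_1 mat"
  assumes A: "A \<in> carrier_mat N N" and y: "y \<in> carrier_vec N"
    and Ay: "A *\<^sub>v y = unit_vec N r" and r: "r < N" and j: "j < N"
  shows "cofactor A r j = det A * y $ j"
proof -
  have "(det A \<cdot>\<^sub>m 1\<^sub>m N) *\<^sub>v y = (adj_mat A * A) *\<^sub>v y"
    using adj_mat(3)[OF A] by simp
  also have "\<dots> = adj_mat A *\<^sub>v unit_vec N r"
    using adj_mat(1)[OF A] A y Ay by (metis assoc_mult_mat_vec)
  finally have "((det A \<cdot>\<^sub>m 1\<^sub>m N) *\<^sub>v y) $ j = (adj_mat A *\<^sub>v unit_vec N r) $ j"
    by simp
  then show ?thesis
    using adj_mat(1)[OF A] A y j r by (simp add: adj_mat_def scalar_prod_right_unit)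
qed

lemma Amat_mult_vec_eq_unit_vec:
  assumes "\<And>m. m \<le> n \<Longrightarrow> (\<Sum>i\<le>n. f i * pentadiag i m) = (if m = r then 1 else 0)"
  shows "Amat n *\<^sub>v vec (n+1) f = unit_vec (n+1) r"
proof (rule eq_vecI)
  fix m
  assume "m < dim_vec (unit_vec (n+1) r)"
  then have m: "m \<le> n" by simp
  have "(Amat n *\<^sub>v vec (n+1) f) $ m = (\<Sum>i<n+1. Amat n $$ (m,i) * f i)"
    using m Amat_carrier[of n] by (simp add: scalar_prod_def atLeast0LessThan)
  also have "\<dots> = (\<Sum>i\<le>n. f i * pentadiag i m)"
    using m by (simp add: lessThan_Suc_atMost Amat_index pentadiag_commute mult.commute)
  finally show "(Amat n *\<^sub>v vec (n+1) f) $ m = unit_vec (n+1) r $ m"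
    using assms[OF m] m by (simp add: unit_vec_def)
qed (use Amat_carrier[of n] in simp)

lemma Acof_first_row_eq_det:
  assumes "j \<le> n"
  shows "Acof n 0 j = det (Amat n) * cubic n j / ((real n + 3) * (real n + 4))"
proof -
  have "(\<Sum>i\<le>n. cubic n i / ((real n + 3) * (real n + 4)) * pentadiag i m) =
      (if m = 0 then 1 else 0)" if "m \<le> n" for m
    using sum_cubic_mult_pentadiag[OF that] by (simp add: sum_divide_distrib[symmetric])
  then have "Amat n *\<^sub>v vec (n+1) (\<lambda>i. cubic n i / ((real n + 3) * (real n + 4))) =
      unit_vec (n+1) 0"
    by (rule Amat_mult_vec_eq_unit_vec)
  then show ?thesis
    unfolding Acof_def using assms
    by (subst cofactor_eq_det_mult_solution[OF Amat_carrier]) auto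
qed

lemma Acof_last_row_eq_det:
  assumes "j \<le> n"
  shows "Acof n n j = det (Amat n) * cubic n (n - j) / ((real n + 3) * (real n + 4))"
proof -
  have "(\<Sum>i\<le>n. cubic n (n - i) / ((real n + 3) * (real n + 4)) * pentadiag i m) =
      (if m = n then 1 else 0)" if "m \<le> n" for m
  proof -
    have "(\<Sum>i\<le>n. cubic n (n - i) * pentadiag i m) =
        (\<Sum>i\<le>n. cubic n i * pentadiag (n - i) m)"
      by (rule sum.reindex_bij_witness[where i="\<lambda>i. n - i" and j="\<lambda>i. n - i"]) auto
    also have "\<dots> = (\<Sum>i\<le>n. cubic n i * pentadiag i (n - m))"
      using that by (intro sum.cong refl) (simp add: pentadiag_reflect)
    finally show ?thesis
      using that sum_cubic_mult_pentadiag[of "n - m" n] by (simp add: sum_divide_distrib[symmetric])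
  qed
  then have "Amat n *\<^sub>v vec (n+1) (\<lambda>i. cubic n (n - i) / ((real n + 3) * (real n + 4))) =
      unit_vec (n+1) n"
    by (rule Amat_mult_vec_eq_unit_vec)
  then show ?thesis
    unfolding Acof_def using assms
    by (subst cofactor_eq_det_mult_solution[OF Amat_carrier]) auto
qed

lemma Acof_0_0: "Acof n 0 0 = Dn n"
proof (cases n)
  case 0
  have "mat_delete (Amat 0) 0 0 \<in> carrier_mat 0 0"
    using mat_delete_carrier[OF Amat_carrier[of 0]] by simp
  then show ?thesis
    using 0 by (simp add: Acof_def cofactor_def Dn_def)
next
  case (Suc n')
  have "mat_delete (Amat n) 0 0 = Amat n'"
  proof (rule eq_matI)
    fix i j
    assume "i < dim_row (Amat n')" "j < dim_col (Amat n')"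
    then show "mat_delete (Amat n) 0 0 $$ (i, j) = Amat n' $$ (i, j)"
      using Suc Amat_carrier[of n] Amat_carrier[of n']
      by (simp add: mat_delete_def Amat_index pentadiag_Suc_Suc)
  qed (use Suc Amat_carrier[of n] Amat_carrier[of n'] in auto)
  then show ?thesis
    using Suc by (simp add: Acof_def cofactor_def Dn_def)
qed

lemma Dn_eq: "Dn n = (real n + 1) * (real n + 2)^2 * (real n + 3) / 12"
proof (induction n)
  case 0
  then show ?case by (simp add: Dn_def)
next
  case (Suc n)
  have nz: "real n + 1 \<noteq> 0" "real n + 2 \<noteq> 0" "real n + 3 \<noteq> 0" "real n + 4 \<noteq> 0"
    by linarith+
  have "Dn n = Dn (Suc n) * ((real n + 1) * (real n + 2)) / ((real n + 3) * (real n + 4))"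
    using Acof_first_row_eq_det[of 0 n] by (simp add: Acof_0_0 Dn_def cubic_def)
  then have "Dn (Suc n) * ((real n + 1) * (real n + 2)) = Dn n * ((real n + 3) * (real n + 4))"
    using nz by (simp add: eq_divide_eq)
  also have "\<dots> = (real n + 2) * (real n + 3)^2 * (real n + 4) / 12 * ((real n + 1) * (real n + 2))"
    unfolding Suc.IH by (simp add: power2_eq_square algebra_simps)
  finally have "Dn (Suc n) = (real n + 2) * (real n + 3)^2 * (real n + 4) / 12"
    using nz by (metis mult_right_cancel mult_eq_0_iff)
  then show ?case
    by (simp add: add.commute add.left_commute)
qed

lemma det_Amat: "det (Amat n) = (real n + 2) * (real n + 3)^2 * (real n + 4) / 12"
  using Dn_eq[of "Suc n"] by (simp add: Dn_def add.commute add.left_commute)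

lemma det_Amat_divide:
  "det (Amat n) / ((real n + 3) * (real n + 4)) = (real n + 2) * (real n + 3) / 12"
  unfolding det_Amat by (simp add: power2_eq_square divide_simps add_pos_nonneg)

lemma Acof_first_row_eq:
  "j \<le> n \<Longrightarrow> Acof n 0 j = (real n + 2) * (real n + 3) / 12 * cubic n j"
  by (simp add: Acof_first_row_eq_det det_Amat_divide[symmetric])

lemma Acof_last_row_eq:
  "j \<le> n \<Longrightarrow> Acof n n j = (real n + 2) * (real n + 3) / 12 * cubic n (n - j)"
  by (simp add: Acof_last_row_eq_det det_Amat_divide[symmetric])

lemma Dn_pos: "Dn n > 0"
  by (simp add: Dn_eq add_pos_nonneg)

lemma hnorm_pp: "hnorm pp = sqrt 6"
  using hip_pp_shifts[of 0 0 0 0] by (simp add: hnorm_def pentadiag_def)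

lemma phi_eq_sum:
  "phi n = smult [:1 / sqrt (Dn (n+1) * Dn n):] (\<Sum>j\<le>n. smult [:Acof n 0 j:] (pp * zz^j * ww^(n-j)))"
  by (simp add: phi_def hnorm_pp Acof_0_0 Dn_eq)

lemma psi_eq_sum:
  "psi n = smult [:1 / sqrt (Dn (n+1) * Dn n):] (\<Sum>j\<le>n. smult [:Acof n n j:] (pp * zz^j * ww^(n-j)))"
  by (cases "n = 0") (simp_all add: psi_def hnorm_pp Acof_0_0 Dn_eq)

lemma hip_shifted_phi_psi_double_sum:
  "hip (ww^k * phi n) (zz^k * psi n) =
     (\<Sum>j\<le>n. Acof n n j * (\<Sum>i\<le>n. Acof n 0 i * pentadiag i (j+k))) / (Dn n * Dn (n+1))"
proof -
  define r where "r = 1 / sqrt (Dn (n+1) * Dn n)"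
  have "ww^k * phi n = smult [:r:] (\<Sum>i\<le>n. smult [:Acof n 0 i:] (pp * zz^i * ww^(n-i+k)))"
    unfolding phi_eq_sum r_def mult_smult_right sum_distrib_left
    by (intro arg_cong[where f="smult _"] sum.cong refl) (simp only: mult_smult_right power_add mult_ac)
  moreover have "zz^k * psi n = smult [:r:] (\<Sum>j\<le>n. smult [:Acof n n j:] (pp * zz^(j+k) * ww^(n-j)))"
    unfolding psi_eq_sum r_def mult_smult_right sum_distrib_left
    by (intro arg_cong[where f="smult _"] sum.cong refl) (simp only: mult_smult_right power_add mult_ac)
  moreover have "r * r = 1 / (Dn n * Dn (n+1))"
    unfolding r_def using Dn_pos[of n] Dn_pos[of "n+1"] by (simp add: mult.commute)
  moreover have "hip (\<Sum>i\<le>n. smult [:Acof n 0 i:] (pp * zz^i * ww^(n-i+k)))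
      (\<Sum>j\<le>n. smult [:Acof n n j:] (pp * zz^(j+k) * ww^(n-j)))
      = (\<Sum>j\<le>n. Acof n n j * (\<Sum>i\<le>n. Acof n 0 i * pentadiag i (j+k)))"
    unfolding hip_sum_left hip_smult_left hip_sum_right hip_smult_right
    by (intro sum.cong refl arg_cong[where f="\<lambda>x. _ * x"]) (subst hip_pp_shifts, auto)
  ultimately show ?thesis
    by (simp add: hip_smult_left hip_smult_right mult.assoc[symmetric])
qed

(* The case m = n + 1 is the Laplace expansion of A^{n+1}_{0,n+1} along its last row; here it is
   simply checked on the closed forms. *)
lemma sum_Acof_first_row_mult_pentadiag:
  assumes "2 \<le> m"
  shows "(\<Sum>i\<le>n. Acof n 0 i * pentadiag i m) =
    (if m = n + 1 then - Acof (n+1) 0 (n+1) else if m = n + 2 then Acof n 0 n else 0)"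
proof -
  let ?c = "(real n + 2) * (real n + 3) / 12"
  have "(\<Sum>i\<le>n. Acof n 0 i * pentadiag i m) = ?c * (\<Sum>i\<le>n. cubic n i * pentadiag i m)"
    unfolding sum_distrib_left by (intro sum.cong refl) (simp add: Acof_first_row_eq)
  also have "(\<Sum>i\<le>n. cubic n i * pentadiag i m) =
      (if m = n + 1 then cubic n (n-1) - 4 * cubic n n else if m = n + 2 then cubic n n else 0)"
  proof (cases "m \<le> n")
    case True
    then show ?thesis
      using sum_cubic_mult_pentadiag[OF True] assms by simp
  next
    case False
    then show ?thesis
      unfolding sum_mult_pentadiag using assms by auto
  qed
  also have "?c * (if m = n + 1 then cubic n (n-1) - 4 * cubic n n
      else if m = n + 2 then cubic n n else 0) =
      (if m = n + 1 then - Acof (n+1) 0 (n+1) else if m = n + 2 then Acof n 0 n else 0)"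
    using assms by (auto simp: Acof_first_row_eq cubic_def of_nat_diff algebra_simps)
  finally show ?thesis .
qed

lemma hip_shifted_phi_psi_cofactors:
  assumes k: "2 \<le> k"
  shows "hip (ww^k * phi n) (zz^k * psi n) =
    (if n + 3 \<le> k then 0
     else if n + 2 = k then Acof n 0 n * Acof n n 0 / (Dn n * Dn (n+1))
     else (- Acof (n+1) 0 (n+1) * Acof n n (n+1-k) + Acof n 0 n * Acof n n (n+2-k))
            / (Dn n * Dn (n+1)))"
proof -
  define S where "S = (\<Sum>j\<le>n. Acof n n j * (\<Sum>i\<le>n. Acof n 0 i * pentadiag i (j+k)))"
  have S_eq: "S = (\<Sum>j\<le>n. (if j + k = n + 1 then - Acof (n+1) 0 (n+1) * Acof n n j else 0)
      + (if j + k = n + 2 then Acof n 0 n * Acof n n j else 0))"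
    unfolding S_def using k by (intro sum.cong refl) (simp add: sum_Acof_first_row_mult_pentadiag)
  consider "n + 3 \<le> k" | "n + 2 = k" | "k \<le> n + 1"
    by linarith
  then have "S = (if n + 3 \<le> k then 0
     else if n + 2 = k then Acof n 0 n * Acof n n 0
     else - Acof (n+1) 0 (n+1) * Acof n n (n+1-k) + Acof n 0 n * Acof n n (n+2-k))"
  proof cases
    case 1
    then show ?thesis
      unfolding S_eq by (intro trans[OF sum.neutral]) auto
  next
    case 2
    then show ?thesis
      unfolding S_eq by (simp add: sum.distrib)
  next
    case 3
    have "j + k = n + 1 \<longleftrightarrow> j = n + 1 - k" "j + k = n + 2 \<longleftrightarrow> j = n + 2 - k" for j
      using 3 by auto
    moreover have "n + 1 - k \<le> n" "n + 2 - k \<le> n"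
      using k by auto
    ultimately show ?thesis
      unfolding S_eq using 3 by (simp add: sum.distrib)
  qed
  then show ?thesis
    unfolding hip_shifted_phi_psi_double_sum S_def[symmetric] by simp
qed

definition sigma_term :: "real \<Rightarrow> real \<Rightarrow> real" where
  "sigma_term k x = 2 * (x + 3 - k) * (x^2 + 5*x + 4 + 3*k - 3*k^2) / ((x+1) * (x+2) * (x+3) * (x+4))"

lemma hip_shifted_phi_psi_sigma_term:
  assumes k: "2 \<le> k" "k \<le> n + 2"
  shows "hip (ww^k * phi n) (zz^k * psi n) = - sigma_term (real k) (real n)"
proof -
  define x where "x = real n"
  define K where "K = real k"
  have x: "x + 1 > 0" "x + 2 > 0" "x + 3 > 0" "x + 4 > 0"
    unfolding x_def by linarith+
  have D: "Dn n * Dn (n+1) = (x+1) * (x+2)^2 * (x+3) / 12 * ((x+2) * (x+3)^2 * (x+4) / 12)"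
    unfolding Dn_eq x_def by (simp add: add.commute add.left_commute)
  have A0: "Acof n 0 n = (x+2) * (x+3) / 12 * (2 * (x+1))"
    unfolding x_def by (simp add: Acof_first_row_eq cubic_def)
  show ?thesis
  proof (cases "k = n + 2")
    case True
    have An: "Acof n n 0 = (x+2) * (x+3) / 12 * (2 * (x+1))"
      unfolding x_def by (simp add: Acof_last_row_eq cubic_def)
    have "hip (ww^k * phi n) (zz^k * psi n) = Acof n 0 n * Acof n n 0 / (Dn n * Dn (n+1))"
      unfolding hip_shifted_phi_psi_cofactors[OF k(1)] using True by simp
    also have "\<dots> = - sigma_term (x + 2) x"
      unfolding A0 An D sigma_term_def using x
      by (simp add: divide_simps) (simp add: algebra_simps power2_eq_square)
    finally show ?thesis
      unfolding x_def True by (simp add: add.commute)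
  next
    case False
    have A1: "Acof (n+1) 0 (n+1) = (x+3) * (x+4) / 12 * (2 * (x+2))"
      unfolding x_def by (simp add: Acof_first_row_eq cubic_def algebra_simps)
    have A2: "Acof n n (n+1-k) = (x+2) * (x+3) / 12 * (K * (x+2-K) * (x+3-K))"
      using k False unfolding x_def K_def
      by (simp add: Acof_last_row_eq cubic_def of_nat_diff algebra_simps)
    have A3: "Acof n n (n+2-k) = (x+2) * (x+3) / 12 * ((K-1) * (x+3-K) * (x+4-K))"
      using k False unfolding x_def K_def
      by (simp add: Acof_last_row_eq cubic_def of_nat_diff algebra_simps)
    have "hip (ww^k * phi n) (zz^k * psi n) =
        (- Acof (n+1) 0 (n+1) * Acof n n (n+1-k) + Acof n 0 n * Acof n n (n+2-k)) / (Dn n * Dn (n+1))"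
      unfolding hip_shifted_phi_psi_cofactors[OF k(1)] using False k by simp
    also have "\<dots> = - sigma_term K x"
      unfolding A0 A1 A2 A3 D sigma_term_def using x
      by (simp add: divide_simps) (simp add: algebra_simps power2_eq_square)
    finally show ?thesis
      unfolding x_def K_def .
  qed
qed

lemma abs_sigma_term_le:
  fixes k x :: real
  assumes k: "2 \<le> k" "k \<le> x + 2"
  shows "\<bar>sigma_term k x\<bar> \<le> 4 / (x + 2)"
proof -
  have x: "0 \<le> x"
    using k by linarith
  define P where "P = k * (k - 1)"
  have "0 \<le> P"
    unfolding P_def using k by simp
  have "P \<le> (x + 2) * (x + 1)"
    unfolding P_def using k by (intro mult_mono) auto
  also have "\<dots> \<le> (x + 4) * (x + 1)"
    using x by (intro mult_right_mono) auto
  finally have Q: "\<bar>(x + 1) * (x + 4) - 3 * P\<bar> \<le> 2 * ((x + 1) * (x + 4))"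
    using \<open>0 \<le> P\<close> x by (simp add: abs_le_iff mult.commute)
  have "x^2 + 5*x + 4 + 3*k - 3*k^2 = (x + 1) * (x + 4) - 3 * P"
    unfolding P_def by (simp add: power2_eq_square algebra_simps)
  then have "\<bar>2 * (x + 3 - k) * (x^2 + 5*x + 4 + 3*k - 3*k^2)\<bar> =
      2 * (x + 3 - k) * \<bar>(x + 1) * (x + 4) - 3 * P\<bar>"
    using k by (simp add: abs_mult)
  also have "\<dots> \<le> 2 * (x + 1) * (2 * ((x + 1) * (x + 4)))"
    using Q k x by (intro mult_mono) auto
  finally have num: "\<bar>2 * (x + 3 - k) * (x^2 + 5*x + 4 + 3*k - 3*k^2)\<bar> \<le>
      2 * (x + 1) * (2 * ((x + 1) * (x + 4)))" .
  have den: "(x + 1) * (x + 2) * (x + 3) * (x + 4) > 0"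
    using x by (simp add: add_pos_nonneg)
  have "\<bar>sigma_term k x\<bar> =
      \<bar>2 * (x + 3 - k) * (x^2 + 5*x + 4 + 3*k - 3*k^2)\<bar> / ((x + 1) * (x + 2) * (x + 3) * (x + 4))"
    unfolding sigma_term_def abs_divide using den by simp
  also have "\<dots> \<le>
      2 * (x + 1) * (2 * ((x + 1) * (x + 4))) / ((x + 1) * (x + 2) * (x + 3) * (x + 4))"
    using den by (intro divide_right_mono num) simp
  also have "\<dots> \<le> 4 / (x + 2)"
    using x by (simp add: divide_simps) (simp add: algebra_simps)
  finally show ?thesis .
qed

lemma summable_inverse_consecutive: "summable (\<lambda>m::nat. 1 / ((real m + 1) * (real m + 2)))"
proof -
  have "(\<lambda>m. 1 / (real m + 1)) \<longlonglongrightarrow> 0"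
    using LIMSEQ_inverse_real_of_nat by (simp add: inverse_eq_divide add.commute)
  then have "summable (\<lambda>m. 1 / (real m + 1) - 1 / (real (Suc m) + 1))"
    by (rule telescope_summable')
  moreover have "1 / (real m + 1) - 1 / (real (Suc m) + 1) = 1 / ((real m + 1) * (real m + 2))" for m
    by (simp add: field_simps)
  ultimately show ?thesis
    by simp
qed

lemma summable_sigma_term_squared:
  assumes "2 \<le> k"
  shows "summable (\<lambda>m. sigma_term (real k) (real (m + (k - 2)))^2)"
proof (rule summable_comparison_test[OF _ summable_mult[OF summable_inverse_consecutive, of 16]])
  have "sigma_term (real k) (real (m + (k - 2)))^2 \<le> 16 * (1 / ((real m + 1) * (real m + 2)))" for m
  proof -
    let ?x = "real (m + (k - 2))"
    have x: "real m + 2 \<le> ?x + 2"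
      by simp
    have "sigma_term (real k) ?x^2 = \<bar>sigma_term (real k) ?x\<bar>^2"
      by simp
    also have "\<dots> \<le> (4 / (?x + 2))^2"
      using assms by (intro power_mono abs_sigma_term_le) auto
    also have "\<dots> \<le> 16 / ((real m + 1) * (real m + 2))"
      using x by (simp add: power2_eq_square divide_simps mult_mono)
    finally show ?thesis
      by simp
  qed
  then show "\<exists>N. \<forall>m\<ge>N. norm (sigma_term (real k) (real (m + (k - 2)))^2) \<le>
      16 * (1 / ((real m + 1) * (real m + 2)))"
    by auto
qed

lemma Sigma_k_series:
  assumes "2 \<le> k"
  shows "summable (\<lambda>n. \<bar>hip (ww^k * phi n) (zz^k * psi n)\<bar>^2)"
    and "Sigma_k k = (\<Sum>m. sigma_term (real k) (real (m + (k - 2)))^2)"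
proof -
  define V where "V n = \<bar>hip (ww^k * phi n) (zz^k * psi n)\<bar>^2" for n
  have V_shift: "V (m + (k - 2)) = sigma_term (real k) (real (m + (k - 2)))^2" for m
    unfolding V_def using assms by (simp add: hip_shifted_phi_psi_sigma_term)
  have V_initial: "V n = 0" if "n < k - 2" for n
    unfolding V_def using assms that by (simp add: hip_shifted_phi_psi_cofactors)
  have "summable (\<lambda>m. V (m + (k - 2)))"
    unfolding V_shift using summable_sigma_term_squared[OF assms] .
  then show "summable V"
    by simp
  have "Sigma_k k = (\<Sum>m. V (m + (k - 2))) + (\<Sum>i<k - 2. V i)"
    unfolding Sigma_k_def V_def[symmetric] by (rule suminf_split_initial_segment) fact
  then show "Sigma_k k = (\<Sum>m. sigma_term (real k) (real (m + (k - 2)))^2)"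
    by (simp add: V_shift V_initial)
qed

theorem mainTheorem8:
  shows "(\<forall>k n. k \<ge> 2 \<longrightarrow>
            hip (ww^k * phi n) (zz^k * psi n) =
              (if n + 3 \<le> k then 0
               else if n + 2 = k then Acof n 0 n * Acof n n 0 / (Dn n * Dn (n+1))
               else (- Acof (n+1) 0 (n+1) * Acof n n (n+1-k) + Acof n 0 n * Acof n n (n+2-k))
                      / (Dn n * Dn (n+1))))
       \<and> (\<forall>k. k \<ge> 3 \<longrightarrow>
            summable (\<lambda>n. \<bar>hip (ww^k * phi n) (zz^k * psi n)\<bar>^2) \<and>
            summable (\<lambda>m. (let n = real (m + (k - 2)); kk = real k in
               (2 * (n + 3 - kk) * (n^2 + 5*n + 4 + 3*kk - 3*kk^2))
                 / ((n+1)*(n+2)*(n+3)*(n+4)))^2) \<and>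
            Sigma_k k = (\<Sum>m. (let n = real (m + (k - 2)); kk = real k in
               (2 * (n + 3 - kk) * (n^2 + 5*n + 4 + 3*kk - 3*kk^2))
                 / ((n+1)*(n+2)*(n+3)*(n+4)))^2))"
proof -
  have sigma_term_let: "(let n = real (m + (k - 2)); kk = real k in
      (2 * (n + 3 - kk) * (n^2 + 5*n + 4 + 3*kk - 3*kk^2)) / ((n+1)*(n+2)*(n+3)*(n+4)))
    = sigma_term (real k) (real (m + (k - 2)))" for k m
    by (simp only: Let_def sigma_term_def)
  show ?thesis
    unfolding sigma_term_let
    using hip_shifted_phi_psi_cofactors summable_sigma_term_squared Sigma_k_series by auto
qed

end
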